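(* Under the setting and hypotheses of the convergence theorem stated in the context (existence of a valid solution $\boldsymbol{x}^\star$ and priors satisfying $1\ge q_v>1-\epsilon_v$ if $\mathtt{x}^\star_v=0$, $0\le q_v<\epsilon_v$ if $\mathtt{x}^\star_v=1$), the variable-to-factor messages after the first BP iteration satisfy $$\mathsf{m}^{(1)}_{v\to J}(\mathtt{x}^\star_v)>\mathsf{m}^{(1)}_{v\to J}(1-\mathtt{x}^\star_v)\quad\text{for all } v\in\mathcal{V},\ J\in\mathcal{J}_v.$$
   Context: Factor graph: a finite set $\mathcal{V}$ of binary variables $x_v\in\{0,1\}$ and a finite set $\mathcal{J}$ of factors; each factor $J$ has a nonempty neighborhood $\mathcal{V}_J\subseteq\mathcal{V}$ and a function $\mathsf{g}_J:\{0,1\}^{|\mathcal{V}_J|}\to\{0,1\}$. For $v\in\mathcal{V}$, $\mathcal{J}_v=\{J: v\in\mathcal{V}_J\}$, assumed nonempty. A valid solution is $\boldsymbol{x}^\star\in\{0,1\}^{\mathcal{V}}$ with $\mathsf{g}_J(\boldsymbol{x}^\star_{\mathcal{V}_J})=1$ for all $J$. Define $\kappa_v=\max_{J\in\mathcal{J}_v}|\{\mathbf{x}_{\mathcal{V}_J}:\mathsf{g}_J(\mathbf{x}_{\mathcal{V}_J})=1\}|$ and $\epsilon_v=1/(1+\kappa_v^{|\mathcal{J}_v|})$. BP: priors $\mathrm{P}_v(0)=q_v$, $\mathrm{P}_v(1)=1-q_v$; $\mathsf{m}^{(0)}_{v\to J}(0)=q_v$, $\mathsf{m}^{(0)}_{v\to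 J}(1)=1-q_v$; for $n\ge1$, $\mathsf{m}^{(n)}_{J\to v}(x)=\mathtt{C}^{(n)}_{J\to v}\sum_{\mathbf{x}_{\mathcal{V}_J\setminus v}}\mathsf{g}_J(\mathbf{x}_{\mathcal{V}_J\setminus v},x_v=x)\prod_{y\in\mathcal{V}_J\setminus v}\mathsf{m}^{(n-1)}_{y\to J}(x_y)$ and $\mathsf{m}^{(n)}_{v\to J}(x)=\mathtt{C}^{(n)}_{v\to J}\mathrm{P}_v(x)\prod_{I\in\mathcal{J}_v\setminus J}\mathsf{m}^{(n)}_{I\to v}(x)$, with positive normalizing constants making $\mathsf{m}(0)+\mathsf{m}(1)=1$. *)

theory Defs
  imports Complex_Main "HOL-Library.FuncSet"
begin

text \<open>Factor graph: variable set V (type 'v), factor set F (type 'j),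
  neighbourhood N J, factor functions g J acting on local configurations.\<close>

definition loc_configs :: "'v set \<Rightarrow> ('v \<Rightarrow> nat) set" where
  "loc_configs S = PiE S (\<lambda>_. {0, 1})"

definition Jv :: "'j set \<Rightarrow> ('j \<Rightarrow> 'v set) \<Rightarrow> 'v \<Rightarrow> 'j set" where
  "Jv F N v = {J \<in> F. v \<in> N J}"

definition kappa :: "'j set \<Rightarrow> ('j \<Rightarrow> 'v set) \<Rightarrow> ('j \<Rightarrow> ('v \<Rightarrow> nat) \<Rightarrow> bool) \<Rightarrow> 'v \<Rightarrow> nat" where
  "kappa F N g v = Max ((\<lambda>J. card {x \<in> loc_configs (N J). g J x}) ` Jv F N v)"

definition eps :: "'j set \<Rightarrow> ('j \<Rightarrow> 'v set) \<Rightarrow> ('j \<Rightarrow> ('v \<Rightarrow> nat) \<Rightarrow> bool) \<Rightarrow> 'v \<Rightarrow> real" where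
  "eps F N g v = 1 / (1 + real (kappa F N g v) ^ card (Jv F N v))"

definition prior :: "('v \<Rightarrow> real) \<Rightarrow> 'v \<Rightarrow> nat \<Rightarrow> real" where
  "prior q v x = (if x = 0 then q v else 1 - q v)"

definition normalize2 :: "(nat \<Rightarrow> real) \<Rightarrow> nat \<Rightarrow> real" where
  "normalize2 f x = f x / (f 0 + f 1)"

definition msg_f2v :: "('j \<Rightarrow> 'v set) \<Rightarrow> ('j \<Rightarrow> ('v \<Rightarrow> nat) \<Rightarrow> bool)
    \<Rightarrow> ('v \<Rightarrow> 'j \<Rightarrow> nat \<Rightarrow> real) \<Rightarrow> 'j \<Rightarrow> 'v \<Rightarrow> nat \<Rightarrow> real" where
  "msg_f2v N g m J v = normalize2 (\<lambda>x.
     \<Sum>y\<in>loc_configs (N J - {v}).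
        (if g J (y(v := x)) then 1 else 0) * (\<Prod>u\<in>N J - {v}. m u J (y u)))"

definition msg_v2f :: "'j set \<Rightarrow> ('j \<Rightarrow> 'v set) \<Rightarrow> ('v \<Rightarrow> real)
    \<Rightarrow> ('j \<Rightarrow> 'v \<Rightarrow> nat \<Rightarrow> real) \<Rightarrow> 'v \<Rightarrow> 'j \<Rightarrow> nat \<Rightarrow> real" where
  "msg_v2f F N q mf v J = normalize2 (\<lambda>x.
     prior q v x * (\<Prod>I\<in>Jv F N v - {J}. mf I v x))"

fun bp_v2f :: "'j set \<Rightarrow> ('j \<Rightarrow> 'v set) \<Rightarrow> ('j \<Rightarrow> ('v \<Rightarrow> nat) \<Rightarrow> bool) \<Rightarrow> ('v \<Rightarrow> real)
    \<Rightarrow> nat \<Rightarrow> 'v \<Rightarrow> 'j \<Rightarrow> nat \<Rightarrow> real" where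
  "bp_v2f F N g q 0 = (\<lambda>v J. prior q v)"
| "bp_v2f F N g q (Suc n) =
     msg_v2f F N q (msg_f2v N g (bp_v2f F N g q n))"

end

theory Submission
  imports Defs
begin

text \<open>For every factor I at v, the first factor message puts weight at least 1/\<kappa>_v on x*_v:
  its unnormalized value at x*_v contains the term of the valid configuration x*, whose prior
  weight dominates every other term, and at most \<kappa>_v terms survive the constraint.
  Multiplying these messages over the other factors at v, the weight of x*_v is at least
  (1 - \<epsilon>_v) \<kappa>_v^-(|J_v|-1), while the weight of the other value is below \<epsilon>_v; the choice
  \<epsilon>_v = 1/(1 + \<kappa>_v^|J_v|) makes the former win.\<close>

lemma finite_loc_configs: "finite S \<Longrightarrow> finite (loc_configs S)"
  unfolding loc_configs_def by (intro finite_PiE) auto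

lemma fun_upd_in_loc_configs:
  "y \<in> loc_configs (S - {v}) \<Longrightarrow> v \<in> S \<Longrightarrow> x \<in> {0, 1} \<Longrightarrow> y(v := x) \<in> loc_configs S"
  unfolding loc_configs_def PiE_def Pi_def extensional_def by auto

lemma inj_on_fun_upd_loc_configs: "inj_on (\<lambda>y. y(v := x)) (loc_configs (S - {v}))"
proof (rule inj_onI)
  fix y z assume "y \<in> loc_configs (S - {v})" "z \<in> loc_configs (S - {v})" "y(v := x) = z(v := x)"
  moreover have "y v = undefined" "z v = undefined"
    using calculation unfolding loc_configs_def PiE_def extensional_def by auto
  ultimately show "y = z" by (metis fun_upd_triv fun_upd_upd)
qed

lemma card_fun_upd_loc_configs_le:
  assumes "finite S" "v \<in> S"
  shows "card {y \<in> loc_configs (S - {v}). P (y(v := 0))}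
       + card {y \<in> loc_configs (S - {v}). P (y(v := 1))} \<le> card {x \<in> loc_configs S. P x}"
proof -
  define T where "T b = {y \<in> loc_configs (S - {v}). P (y(v := b))}" for b :: nat
  define U where "U b = (\<lambda>y. y(v := b)) ` T b" for b
  have card_U: "card (U b) = card (T b)" for b
    unfolding U_def T_def
    by (rule card_image, rule inj_on_subset[OF inj_on_fun_upd_loc_configs]) auto
  have finite_U: "finite (U b)" for b
    unfolding U_def T_def using assms(1) by (simp add: finite_loc_configs)
  have disjoint: "U 0 \<inter> U 1 = {}"
    unfolding U_def by (auto dest: fun_cong[where x = v])
  have "U 0 \<union> U 1 \<subseteq> {x \<in> loc_configs S. P x}"
    unfolding U_def T_def using fun_upd_in_loc_configs[OF _ assms(2)] by auto
  then have "card (U 0 \<union> U 1) \<le> card {x \<in> loc_configs S. P x}"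
    using assms(1) by (intro card_mono) (simp_all add: finite_loc_configs)
  then show ?thesis
    using card_Un_disjoint[OF finite_U finite_U disjoint] unfolding card_U T_def by simp
qed

lemma sum_indicator_mult_le:
  fixes w :: "'a \<Rightarrow> real"
  assumes "finite A" "\<forall>y\<in>A. 0 \<le> w y \<and> w y \<le> c"
  shows "(\<Sum>y\<in>A. (if P y then 1 else 0) * w y) \<le> real (card {y \<in> A. P y}) * c"
proof -
  have "(\<Sum>y\<in>A. (if P y then 1 else 0) * w y) \<le> (\<Sum>y\<in>A. if P y then c else 0)"
    using assms(2) by (intro sum_mono) auto
  also have "\<dots> = real (card {y \<in> A. P y}) * c"
    using assms(1) by (simp add: sum.If_cases Int_def)
  finally show ?thesis .
qed

lemma sum_fun_upd_accepting_le:
  fixes w :: "('v \<Rightarrow> nat) \<Rightarrow> real"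
  assumes "finite S" "v \<in> S" "0 \<le> c" "\<forall>y\<in>loc_configs (S - {v}). 0 \<le> w y \<and> w y \<le> c"
  shows "(\<Sum>y\<in>loc_configs (S - {v}). (if P (y(v := 0)) then 1 else 0) * w y)
       + (\<Sum>y\<in>loc_configs (S - {v}). (if P (y(v := 1)) then 1 else 0) * w y)
       \<le> real (card {x \<in> loc_configs S. P x}) * c"
proof -
  let ?L = "loc_configs (S - {v})"
  have "finite ?L" using assms(1) by (simp add: finite_loc_configs)
  then have "(\<Sum>y\<in>?L. (if P (y(v := 0)) then 1 else 0) * w y)
       + (\<Sum>y\<in>?L. (if P (y(v := 1)) then 1 else 0) * w y)
       \<le> real (card {y \<in> ?L. P (y(v := 0))} + card {y \<in> ?L. P (y(v := 1))}) * c"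
    using sum_indicator_mult_le[OF _ assms(4)] by (simp add: distrib_right add_mono)
  also have "\<dots> \<le> real (card {x \<in> loc_configs S. P x}) * c"
    using card_fun_upd_loc_configs_le[OF assms(1,2), of P] assms(3)
    by (intro mult_right_mono) (simp_all only: of_nat_le_iff)
  finally show ?thesis .
qed

lemma normalize2_nonneg: "(\<And>x. 0 \<le> f x) \<Longrightarrow> 0 \<le> normalize2 f x"
  unfolding normalize2_def by (simp add: add_nonneg_nonneg)

lemma normalize2_le_one:
  assumes "\<And>x. 0 \<le> f x" "b \<in> {0, 1}"
  shows "normalize2 f b \<le> 1"
proof -
  have "0 \<le> f 0 + f 1" "f b \<le> f 0 + f 1" using assms by (auto intro: add_nonneg_nonneg)
  then show ?thesis
    unfolding normalize2_def by (cases "f 0 + f 1 = 0") (auto simp: divide_le_eq_1)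
qed

lemma normalize2_ge_inverse:
  fixes k :: real
  assumes "\<And>x. 0 \<le> f x" "b \<in> {0, 1}" "0 < f b" "f 0 + f 1 \<le> k * f b"
  shows "1 / k \<le> normalize2 f b"
proof -
  have "f b \<le> f 0 + f 1" using assms(1,2) by auto
  then have "0 < f 0 + f 1" using assms(3) by linarith
  then have "0 < k * f b" using assms(4) by linarith
  then have "0 < k" using assms(3) by (rule zero_less_mult_pos2)
  with \<open>0 < f 0 + f 1\<close> show ?thesis
    using assms(4) unfolding normalize2_def by (simp add: divide_simps mult.commute)
qed

lemma normalize2_less:
  assumes "b \<in> {0, 1}" "0 \<le> f (1 - b)" "f (1 - b) < f b"
  shows "normalize2 f (1 - b) < normalize2 f b"
proof -
  have "0 < f 0 + f 1" using assms by auto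
  then show ?thesis unfolding normalize2_def using assms(3) by (simp add: divide_strict_right_mono)
qed

lemma msg_f2v_nonneg:
  "\<forall>u\<in>N I. \<forall>x. 0 \<le> m u I x \<Longrightarrow> 0 \<le> msg_f2v N g m I v x"
  unfolding msg_f2v_def by (intro normalize2_nonneg sum_nonneg mult_nonneg_nonneg prod_nonneg) auto

lemma msg_f2v_le_one:
  "\<forall>u\<in>N I. \<forall>x. 0 \<le> m u I x \<Longrightarrow> b \<in> {0, 1} \<Longrightarrow> msg_f2v N g m I v b \<le> 1"
  unfolding msg_f2v_def by (intro normalize2_le_one sum_nonneg mult_nonneg_nonneg prod_nonneg) auto

lemma msg_f2v_ge_inverse_card:
  fixes m :: "'v \<Rightarrow> 'j \<Rightarrow> nat \<Rightarrow> real"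
  assumes "finite (N I)" "v \<in> N I"
    and valid: "g I (restrict xstar (N I))"
    and binary: "\<forall>u\<in>N I. xstar u \<in> {0, 1}"
    and nonneg: "\<forall>u\<in>N I. \<forall>x. 0 \<le> m u I x"
    and dominant: "\<forall>u\<in>N I. \<forall>x\<in>{0, 1}. m u I x \<le> m u I (xstar u)"
    and pos: "\<forall>u\<in>N I. 0 < m u I (xstar u)"
  shows "1 / real (card {x \<in> loc_configs (N I). g I x}) \<le> msg_f2v N g m I v (xstar v)"
proof -
  define L where "L = loc_configs (N I - {v})"
  define w where "w y = (\<Prod>u\<in>N I - {v}. m u I (y u))" for y
  define S where "S x = (\<Sum>y\<in>L. (if g I (y(v := x)) then 1 else 0) * w y)" for x
  define ys where "ys = restrict xstar (N I - {v})"
  have ys_L: "ys \<in> L" unfolding L_def loc_configs_def ys_def using binary by (auto simp: PiE_iff)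
  have w_nonneg: "0 \<le> w y" for y unfolding w_def using nonneg by (intro prod_nonneg) auto
  have w_pos: "0 < w ys" unfolding w_def ys_def using pos by (auto intro!: prod_pos)
  have w_le: "\<forall>y\<in>L. 0 \<le> w y \<and> w y \<le> w ys"
  proof
    fix y assume "y \<in> L"
    then have "\<forall>u\<in>N I - {v}. y u \<in> {0, 1}" unfolding L_def loc_configs_def by (auto simp: PiE_iff)
    then have "\<forall>u\<in>N I - {v}. m u I (y u) \<le> m u I (xstar u)" using dominant by blast
    then have "w y \<le> w ys" unfolding w_def ys_def using nonneg by (intro prod_mono) auto
    with w_nonneg show "0 \<le> w y \<and> w y \<le> w ys" by simp
  qed
  have "(if g I (ys(v := xstar v)) then 1 else 0) * w ys \<le> S (xstar v)"
    unfolding S_def using ys_L assms(1) w_nonneg unfolding L_def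
    by (intro member_le_sum) (simp_all add: finite_loc_configs)
  moreover have "ys(v := xstar v) = restrict xstar (N I)" unfolding ys_def using assms(2) by auto
  ultimately have w_le_S: "w ys \<le> S (xstar v)" using valid by simp
  have "S 0 + S 1 \<le> real (card {x \<in> loc_configs (N I). g I x}) * w ys"
    unfolding S_def L_def using assms(1,2) w_pos w_le unfolding L_def
    by (intro sum_fun_upd_accepting_le) auto
  also have "\<dots> \<le> real (card {x \<in> loc_configs (N I). g I x}) * S (xstar v)"
    using w_le_S by (intro mult_left_mono) auto
  finally have "S 0 + S 1 \<le> real (card {x \<in> loc_configs (N I). g I x}) * S (xstar v)" .
  moreover have "0 \<le> S x" for x unfolding S_def using w_nonneg by (auto intro!: sum_nonneg)
  moreover have "msg_f2v N g m I v = normalize2 S"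
    unfolding msg_f2v_def S_def w_def L_def ..
  ultimately show ?thesis
    using normalize2_ge_inverse[of S] binary assms(2) w_pos w_le_S by simp
qed

lemma msg_v2f_less:
  fixes c :: real
  assumes "finite (Jv F N v)" "b \<in> {0, 1}" "0 \<le> c"
    and messages: "\<forall>I\<in>Jv F N v - {J}. c \<le> mf I v b \<and> 0 \<le> mf I v (1 - b) \<and> mf I v (1 - b) \<le> 1"
    and prior_nonneg: "0 \<le> prior q v (1 - b)"
    and prior_less: "prior q v (1 - b) < prior q v b * c ^ card (Jv F N v - {J})"
  shows "msg_v2f F N q mf v J (1 - b) < msg_v2f F N q mf v J b"
proof -
  define f where "f x = prior q v x * (\<Prod>I\<in>Jv F N v - {J}. mf I v x)" for x
  have "0 < prior q v b * c ^ card (Jv F N v - {J})" using prior_nonneg prior_less by linarith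
  then have "0 \<le> prior q v b" using \<open>0 \<le> c\<close> by (auto simp: zero_less_mult_iff)
  have "f (1 - b) \<le> prior q v (1 - b)"
    unfolding f_def using prior_nonneg messages
    by (intro mult_left_le) (auto intro: prod_le_1 prod_nonneg)
  also have "\<dots> < prior q v b * c ^ card (Jv F N v - {J})" by (fact prior_less)
  also have "\<dots> \<le> f b"
    unfolding f_def using messages \<open>0 \<le> c\<close> \<open>0 \<le> prior q v b\<close>
    by (intro mult_left_mono) (auto simp flip: prod_constant intro: prod_mono)
  finally have "f (1 - b) < f b" .
  moreover have "0 \<le> f (1 - b)"
    unfolding f_def using prior_nonneg messages by (intro mult_nonneg_nonneg prod_nonneg) auto
  ultimately show ?thesis
    unfolding msg_v2f_def f_def[symmetric] using normalize2_less[OF assms(2)] by simp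
qed

lemma inverse_one_plus_power_le:
  fixes K :: real
  assumes "1 \<le> K" "m \<le> n"
  shows "1 / (1 + K ^ n) \<le> (1 - 1 / (1 + K ^ n)) * (1 / K) ^ m"
proof -
  have "0 < K ^ m" "K ^ m \<le> K ^ n" "0 < 1 + K ^ n" using assms by (auto intro: power_increasing add_pos_pos)
  then have "1 \<le> K ^ n / K ^ m" by simp
  then have "1 / (1 + K ^ n) \<le> (K ^ n / K ^ m) / (1 + K ^ n)"
    using \<open>0 < K ^ m\<close> by (intro divide_right_mono) auto
  also have "\<dots> = (1 - 1 / (1 + K ^ n)) * (1 / K) ^ m"
    using \<open>0 < K ^ m\<close> \<open>0 < 1 + K ^ n\<close> by (simp add: power_one_over field_simps)
  finally show ?thesis .
qed

lemma card_accepting_le_kappa: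
  assumes "finite F" "J \<in> Jv F N v"
  shows "card {x \<in> loc_configs (N J). g J x} \<le> kappa F N g v"
proof -
  have "finite (Jv F N v)" using assms(1) unfolding Jv_def by simp
  then show ?thesis unfolding kappa_def using assms(2) by (intro Max_ge) auto
qed

lemma eps_le_half:
  assumes "1 \<le> kappa F N g v"
  shows "eps F N g v \<le> 1 / 2"
proof -
  have "1 \<le> real (kappa F N g v) ^ card (Jv F N v)" using assms by simp
  then show ?thesis unfolding eps_def by (simp add: field_simps)
qed

locale near_solution_priors =
  fixes V :: "'v set" and F :: "'j set" and N :: "'j \<Rightarrow> 'v set"
    and g :: "'j \<Rightarrow> ('v \<Rightarrow> nat) \<Rightarrow> bool" and q :: "'v \<Rightarrow> real"
    and xstar :: "'v \<Rightarrow> nat"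
  assumes finite_V: "finite V" and finite_F: "finite F"
    and nbhd_subset: "J \<in> F \<Longrightarrow> N J \<subseteq> V"
    and Jv_nonempty: "v \<in> V \<Longrightarrow> Jv F N v \<noteq> {}"
    and xstar_binary: "v \<in> V \<Longrightarrow> xstar v \<in> {0, 1}"
    and xstar_valid: "J \<in> F \<Longrightarrow> g J (restrict xstar (N J))"
    and prior_zero: "v \<in> V \<Longrightarrow> xstar v = 0 \<Longrightarrow> 1 - eps F N g v < q v \<and> q v \<le> 1"
    and prior_one: "v \<in> V \<Longrightarrow> xstar v = 1 \<Longrightarrow> 0 \<le> q v \<and> q v < eps F N g v"
begin

lemma finite_nbhd: "J \<in> F \<Longrightarrow> finite (N J)"
  using finite_V nbhd_subset by (blast intro: finite_subset)

lemma finite_Jv: "finite (Jv F N v)"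
  using finite_F unfolding Jv_def by simp

lemma card_accepting_pos:
  assumes "J \<in> F"
  shows "0 < card {x \<in> loc_configs (N J). g J x}"
proof -
  have "restrict xstar (N J) \<in> {x \<in> loc_configs (N J). g J x}"
    using assms xstar_binary nbhd_subset xstar_valid unfolding loc_configs_def by (auto simp: PiE_iff)
  then show ?thesis using finite_nbhd[OF assms] by (auto simp: card_gt_0_iff finite_loc_configs)
qed

lemma kappa_ge_one:
  assumes "v \<in> V"
  shows "1 \<le> kappa F N g v"
proof -
  obtain J where J: "J \<in> Jv F N v" using Jv_nonempty[OF assms] by blast
  then have "J \<in> F" unfolding Jv_def by simp
  then show ?thesis
    using card_accepting_le_kappa[OF finite_F J, where g = g] card_accepting_pos[of J] by linarith
qed

lemma prior_bounds:
  assumes "v \<in> V"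
  shows prior_solution_gt: "1 - eps F N g v < prior q v (xstar v)"
    and prior_flip_nonneg: "0 \<le> prior q v (1 - xstar v)"
    and prior_flip_lt: "prior q v (1 - xstar v) < eps F N g v"
    and prior_nonneg: "0 \<le> prior q v x"
    and prior_le_solution: "x \<in> {0, 1} \<Longrightarrow> prior q v x \<le> prior q v (xstar v)"
    and prior_solution_pos: "0 < prior q v (xstar v)"
proof -
  have eps_half: "eps F N g v \<le> 1 / 2" using eps_le_half[OF kappa_ge_one[OF assms]] .
  have "xstar v = 0 \<or> xstar v = 1" using xstar_binary[OF assms] by simp
  then consider "xstar v = 0" "1 - eps F N g v < q v" "q v \<le> 1"
    | "xstar v = 1" "0 \<le> q v" "q v < eps F N g v"
    using prior_zero[OF assms] prior_one[OF assms] by auto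
  note xstar_cases = this
  show "1 - eps F N g v < prior q v (xstar v)" "0 \<le> prior q v (1 - xstar v)"
    "prior q v (1 - xstar v) < eps F N g v" "0 \<le> prior q v x" "0 < prior q v (xstar v)"
    using xstar_cases eps_half unfolding prior_def by (cases; simp)+
  show "x \<in> {0, 1} \<Longrightarrow> prior q v x \<le> prior q v (xstar v)"
    using xstar_cases eps_half unfolding prior_def by (cases; auto)+
qed

lemma first_f2v_bounds:
  assumes "I \<in> Jv F N v"
  defines "m \<equiv> msg_f2v N g (\<lambda>u J. prior q u) I v"
  shows "1 / real (kappa F N g v) \<le> m (xstar v) \<and> 0 \<le> m (1 - xstar v) \<and> m (1 - xstar v) \<le> 1"
proof -
  have "I \<in> F" "v \<in> N I" using assms(1) unfolding Jv_def by auto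
  with nbhd_subset have "N I \<subseteq> V" "v \<in> V" by auto
  then have nonneg: "\<forall>u\<in>N I. \<forall>x. 0 \<le> prior q u x" using prior_nonneg by blast
  have "1 / real (kappa F N g v) \<le> 1 / real (card {x \<in> loc_configs (N I). g I x})"
    using card_accepting_le_kappa[OF finite_F assms(1)] card_accepting_pos[OF \<open>I \<in> F\<close>]
    by (simp add: frac_le)
  also have "\<dots> \<le> m (xstar v)"
    unfolding m_def
  proof (rule msg_f2v_ge_inverse_card[where N = N and I = I, OF finite_nbhd[OF \<open>I \<in> F\<close>] \<open>v \<in> N I\<close>])
    show "g I (restrict xstar (N I))" using xstar_valid[OF \<open>I \<in> F\<close>] .
    show "\<forall>u\<in>N I. xstar u \<in> {0, 1}" using xstar_binary \<open>N I \<subseteq> V\<close> by blast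
    show "\<forall>u\<in>N I. \<forall>x\<in>{0, 1}. prior q u x \<le> prior q u (xstar u)"
      using prior_le_solution \<open>N I \<subseteq> V\<close> by blast
    show "\<forall>u\<in>N I. 0 < prior q u (xstar u)" using prior_solution_pos \<open>N I \<subseteq> V\<close> by blast
  qed (fact nonneg)
  finally show ?thesis
    unfolding m_def using msg_f2v_nonneg[where N = N and I = I and m = "\<lambda>u J. prior q u", OF nonneg]
      msg_f2v_le_one[where N = N and I = I and m = "\<lambda>u J. prior q u", OF nonneg]
      xstar_binary[OF \<open>v \<in> V\<close>] by auto
qed

lemma first_v2f_favours_solution:
  assumes "v \<in> V" "J \<in> Jv F N v"
  shows "bp_v2f F N g q 1 v J (1 - xstar v) < bp_v2f F N g q 1 v J (xstar v)"
proof -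
  define K where "K = real (kappa F N g v)"
  have "1 \<le> K" unfolding K_def using kappa_ge_one[OF assms(1)] by simp
  have "prior q v (1 - xstar v) < eps F N g v" using prior_flip_lt[OF assms(1)] .
  also have "\<dots> \<le> (1 - eps F N g v) * (1 / K) ^ card (Jv F N v - {J})"
    unfolding eps_def K_def using kappa_ge_one[OF assms(1)] finite_Jv
    by (intro inverse_one_plus_power_le) (simp_all add: card_Diff1_le)
  also have "\<dots> \<le> prior q v (xstar v) * (1 / K) ^ card (Jv F N v - {J})"
    using prior_solution_gt[OF assms(1)] \<open>1 \<le> K\<close> by (intro mult_right_mono) auto
  finally have "msg_v2f F N q (msg_f2v N g (\<lambda>u J. prior q u)) v J (1 - xstar v)
      < msg_v2f F N q (msg_f2v N g (\<lambda>u J. prior q u)) v J (xstar v)"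
    using finite_Jv xstar_binary[OF assms(1)] first_f2v_bounds prior_flip_nonneg[OF assms(1)] \<open>1 \<le> K\<close>
    unfolding K_def by (intro msg_v2f_less) auto
  then show ?thesis by simp
qed

end

theorem lemma2:
  fixes V :: "'v set" and F :: "'j set" and N :: "'j \<Rightarrow> 'v set"
    and g :: "'j \<Rightarrow> ('v \<Rightarrow> nat) \<Rightarrow> bool" and q :: "'v \<Rightarrow> real"
    and xstar :: "'v \<Rightarrow> nat"
  assumes "finite V" and "finite F"
    and "\<forall>J\<in>F. N J \<noteq> {} \<and> N J \<subseteq> V"
    and "\<forall>v\<in>V. Jv F N v \<noteq> {}"
    and "\<forall>v\<in>V. xstar v \<in> {0, 1}"
    and "\<forall>J\<in>F. g J (restrict xstar (N J))"
    and "\<forall>v\<in>V. xstar v = 0 \<longrightarrow> 1 - eps F N g v < q v \<and> q v \<le> 1"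
    and "\<forall>v\<in>V. xstar v = 1 \<longrightarrow> 0 \<le> q v \<and> q v < eps F N g v"
  shows "\<forall>v\<in>V. \<forall>J\<in>Jv F N v.
           bp_v2f F N g q 1 v J (xstar v) > bp_v2f F N g q 1 v J (1 - xstar v)"
proof -
  interpret near_solution_priors V F N g q xstar
    using assms by unfold_locales auto
  show ?thesis using first_v2f_favours_solution by blast
qed

end
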